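(* Let $p,q\ge 2$ be relatively prime integers, and let $\omega_j=e^{2\pi i j/p}$ and $\xi_j=e^{2\pi i j/q}$. Then $$p\sum_{j=1}^{q-1}\frac{\xi_j}{(\xi_j-1)^3(\xi_j^p-1)}+q\sum_{j=1}^{p-1}\frac{\omega_j}{(\omega_j-1)^3(\omega_j^q-1)}=\frac{1}{720}\left(p^4+q^4-5p^2q^2-15p^2q-15pq^2+15p+15q+3\right).$$ *)

theory Defs
  imports "HOL-Analysis.Analysis"
begin

end

theory Submission
  imports Defs "HOL-Complex_Analysis.Complex_Analysis"
begin

text \<open>
  Both sums are residues of f(z) = 1 / ((z - 1)^3 (z^p - 1) (z^q - 1)). Since p and q are
  coprime, the poles of f are the nontrivial q-th roots of unity \<xi>, which are simple with
  residue \<xi> / (q (\<xi> - 1)^3 (\<xi>^p - 1)), symmetrically the nontrivial p-th roots of unity, and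
  a pole of order 5 at 1. As f(z) = O(|z|^-5), integrating over large circles shows that the
  residues sum to zero, so the two sums are determined by the residue at 1. Writing z = 1 + t,
  f = 1 / (t^5 B(t)) with B(t) = (((1 + t)^p - 1) / t) (((1 + t)^q - 1) / t) and B(0) = pq,
  so that residue is the coefficient of t^4 in 1 / B, a polynomial in the binomial
  coefficients of p and q.
\<close>

definition unit_root :: "nat \<Rightarrow> nat \<Rightarrow> complex" where
  "unit_root n j = exp (2 * of_real pi * \<i> * of_nat j / of_nat n)"

lemma unit_root_pow_eq_1: "n \<ge> 1 \<Longrightarrow> unit_root n j ^ n = 1"
  unfolding unit_root_def by (simp add: complex_root_unity)

lemma unit_root_power: "unit_root n j ^ m = unit_root n (j * m)"
  unfolding unit_root_def exp_of_nat_mult[symmetric] by (simp add: algebra_simps)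

lemma unit_root_eq_1_iff: "n \<ge> 1 \<Longrightarrow> unit_root n j = 1 \<longleftrightarrow> n dvd j"
  unfolding unit_root_def by (rule complex_root_unity_eq_1)

lemma inj_on_unit_root: "n \<ge> 1 \<Longrightarrow> inj_on (unit_root n) {..<n}"
  unfolding unit_root_def by (intro inj_onI) (auto simp: complex_root_unity_eq)

lemma roots_of_unity_eq:
  assumes n: "n \<ge> 1"
  shows "{z. z ^ n = 1} = insert 1 (unit_root n ` {1..n-1})"
proof -
  have "{z. z ^ n = 1} = unit_root n ` {..<n}"
    using complex_roots_unity[OF n] by (auto simp: unit_root_def)
  also have "{..<n} = insert 0 {1..n-1}" using n by auto
  finally show ?thesis by (simp add: unit_root_def)
qed

lemma unit_root_ne_1: "j \<in> {1..n-1} \<Longrightarrow> unit_root n j \<noteq> 1"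
  using nat_dvd_not_less[of j n] by (auto simp: unit_root_eq_1_iff)

lemma unit_root_power_ne_1:
  assumes "coprime m n" and "j \<in> {1..n-1}"
  shows "unit_root n j ^ m \<noteq> 1"
proof -
  have "n \<ge> 1" "\<not> n dvd j" using assms(2) by (auto dest: dvd_imp_le)
  moreover have "coprime n m" using assms(1) by (simp add: coprime_commute)
  ultimately show ?thesis by (simp add: unit_root_power unit_root_eq_1_iff coprime_dvd_mult_left_iff)
qed

lemma nontrivial_unit_roots_disjoint:
  assumes "coprime p q" and "p \<ge> 1"
  shows "unit_root q ` {1..q-1} \<inter> unit_root p ` {1..p-1} = {}"
  using unit_root_power_ne_1[OF assms(1)] unit_root_pow_eq_1[OF assms(2)] by fastforce

lemma norm_power_sub_one_ge:
  fixes z :: "'a::real_normed_div_algebra"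
  assumes "n \<ge> 1" and "norm z \<ge> 2"
  shows "norm (z ^ n - 1) \<ge> norm z / 2"
proof -
  have "norm z \<le> norm z ^ n" using assms power_increasing[of 1 n "norm z"] by simp
  moreover have "norm (z ^ n) - norm (1::'a) \<le> norm (z ^ n - 1)" by (rule norm_triangle_ineq2)
  ultimately show ?thesis using assms(2) by (simp add: norm_power)
qed

lemma has_contour_integral_circlepath_sum_residues:
  fixes f :: "complex \<Rightarrow> complex"
  assumes "finite S" and holo: "f holomorphic_on - S"
    and "R > 0" and inside: "\<And>s. s \<in> S \<Longrightarrow> norm s < R"
  shows "(f has_contour_integral 2 * pi * \<i> * (\<Sum>s\<in>S. residue f s)) (circlepath 0 R)"
proof -
  have img: "path_image (circlepath 0 R) \<subseteq> UNIV - S"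
    using inside \<open>R > 0\<close> by force
  have "contour_integral (circlepath 0 R) f =
      2 * pi * \<i> * (\<Sum>s\<in>S. winding_number (circlepath 0 R) s * residue f s)"
    using \<open>R > 0\<close> holo by (intro Residue_theorem[OF open_UNIV connected_UNIV assms(1) _ _ _ img])
      (auto simp: Compl_eq_Diff_UNIV)
  also have "(\<Sum>s\<in>S. winding_number (circlepath 0 R) s * residue f s) = (\<Sum>s\<in>S. residue f s)"
    using inside by (intro sum.cong refl) (simp add: winding_number_circlepath)
  finally show ?thesis
    using holomorphic_on_subset[OF holo] img
    by (metis Compl_eq_Diff_UNIV contour_integrable_continuous_circlepath has_contour_integral_integral
        holomorphic_on_imp_continuous_on)
qed

lemma sum_residues_eq_0_if_decay:
  fixes f :: "complex \<Rightarrow> complex"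
  assumes "finite S" and holo: "f holomorphic_on - S"
    and decay: "\<And>z. norm z \<ge> R\<^sub>0 \<Longrightarrow> norm (f z) \<le> B / norm z ^ 2"
  shows "(\<Sum>s\<in>S. residue f s) = 0"
proof -
  define C where "C = (\<Sum>s\<in>S. residue f s)"
  obtain b where b: "\<And>s. s \<in> S \<Longrightarrow> norm s \<le> b"
    using finite_imp_bounded[OF assms(1)] bounded_iff by blast
  have B_nonneg: "B \<ge> 0"
  proof -
    define z :: complex where "z = of_real (max 1 R\<^sub>0)"
    have "norm z = max 1 R\<^sub>0" by (simp add: z_def)
    then have "norm (f z) \<le> B / max 1 R\<^sub>0 ^ 2" using decay[of z] by simp
    then have "0 \<le> B / max 1 R\<^sub>0 ^ 2" using norm_ge_zero[of "f z"] by linarith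
    then show ?thesis by (auto simp: zero_le_divide_iff)
  qed
  define R\<^sub>1 where "R\<^sub>1 = max (max 1 R\<^sub>0) (b + 1)"
  have bound: "norm C \<le> B / R" if R: "R \<ge> R\<^sub>1" for R
  proof -
    have R_pos: "R > 0" and R_ge: "R \<ge> R\<^sub>0" using R unfolding R\<^sub>1_def by linarith+
    have "(f has_contour_integral 2 * pi * \<i> * C) (circlepath 0 R)"
      unfolding C_def using b R R_pos
      by (intro has_contour_integral_circlepath_sum_residues assms(1) holo) (force simp: R\<^sub>1_def)+
    then have "norm (2 * pi * \<i> * C) \<le> B / R ^ 2 * (2 * pi * R)"
      using R_pos R_ge B_nonneg by (intro has_contour_integral_bound_circlepath) (auto intro!: decay)
    then show ?thesis using R_pos by (simp add: norm_mult field_simps power2_eq_square)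
  qed
  have "norm C \<le> 0"
  proof (rule tendsto_le[OF trivial_limit_at_top_linorder _ tendsto_const])
    show "((\<lambda>R. B / R) \<longlongrightarrow> 0) at_top"
      by (intro tendsto_divide_0[OF tendsto_const] filterlim_at_top_imp_at_infinity filterlim_ident)
    show "\<forall>\<^sub>F R in at_top. norm C \<le> B / R"
      using eventually_ge_at_top[of R\<^sub>1] by eventually_elim (rule bound)
  qed
  then show ?thesis by (simp add: C_def)
qed

definition rational_kernel :: "nat \<Rightarrow> nat \<Rightarrow> complex \<Rightarrow> complex" where
  "rational_kernel p q z = 1 / ((z - 1) ^ 3 * (z ^ p - 1) * (z ^ q - 1))"

lemma rational_kernel_commute: "rational_kernel p q = rational_kernel q p"
  by (simp add: rational_kernel_def fun_eq_iff mult_ac)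

lemma holomorphic_rational_kernel:
  "rational_kernel p q holomorphic_on - ({1} \<union> {z. z ^ p = 1} \<union> {z. z ^ q = 1})"
  unfolding rational_kernel_def by (intro holomorphic_intros) auto

lemma norm_rational_kernel_le:
  assumes "p \<ge> 1" "q \<ge> 1" "norm z \<ge> 2"
  shows "norm (rational_kernel p q z) \<le> 4 / norm z ^ 2"
proof -
  have "1 \<le> norm (z - 1) ^ 3"
    using norm_power_sub_one_ge[of 1 z] assms(3) by simp
  moreover have "norm z / 2 \<le> norm (z ^ p - 1)" "norm z / 2 \<le> norm (z ^ q - 1)"
    using norm_power_sub_one_ge assms by blast+
  ultimately have "1 * (norm z / 2) * (norm z / 2)
      \<le> norm (z - 1) ^ 3 * norm (z ^ p - 1) * norm (z ^ q - 1)"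
    using assms(3) by (intro mult_mono) simp_all
  then have denom: "norm z ^ 2 / 4 \<le> norm ((z - 1) ^ 3 * (z ^ p - 1) * (z ^ q - 1))"
    by (simp add: norm_mult norm_power power2_eq_square)
  have "norm z ^ 2 / 4 > 0" using assms(3) by auto
  then have "norm (rational_kernel p q z) \<le> 1 / (norm z ^ 2 / 4)"
    unfolding rational_kernel_def norm_divide norm_one using denom
    by (intro divide_left_mono mult_pos_pos) auto
  then show ?thesis by simp
qed

lemma residue_rational_kernel_at_root:
  fixes w :: complex
  assumes "q \<ge> 1" "w ^ q = 1" "w \<noteq> 1" "w ^ p \<noteq> 1"
  shows "residue (rational_kernel p q) w = w / (of_nat q * (w - 1) ^ 3 * (w ^ p - 1))"
proof -
  have kernel_eq: "rational_kernel p q = (\<lambda>z. 1 / ((z - 1) ^ 3 * (z ^ p - 1)) / (z ^ q - 1))"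
    by (simp add: rational_kernel_def fun_eq_iff)
  define S :: "complex set" where "S = - ({1} \<union> {z. z ^ p = 1})"
  have "finite ({1} \<union> {z::complex. z ^ p = 1})"
    using assms(4) by (cases "p = 0") (auto simp: finite_roots_unity)
  then have S: "open S" "connected S" "w \<in> S"
    using assms(3,4) unfolding S_def
    by (auto intro!: connected_open_diff_countable countable_finite finite_imp_closed
        simp: Compl_eq_Diff_UNIV)
  have "(\<lambda>z. 1 / ((z - 1) ^ 3 * (z ^ p - 1))) holomorphic_on S"
    unfolding S_def by (intro holomorphic_intros) auto
  moreover have "((\<lambda>z. z ^ q - 1) has_field_derivative of_nat q * w ^ (q - 1)) (at w)"
    by (auto intro!: derivative_eq_intros)
  moreover have w_pow: "w * w ^ (q - 1) = 1"
    using assms(1,2) by (metis power_Suc Suc_diff_1 less_le_trans zero_less_one)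
  ultimately have "residue (rational_kernel p q) w
      = 1 / ((w - 1) ^ 3 * (w ^ p - 1)) / (of_nat q * w ^ (q - 1))"
    unfolding kernel_eq using assms S
    by (intro residue_simple_pole_deriv[where s = S]) (auto intro!: holomorphic_intros)
  also have "\<dots> = w / (of_nat q * (w - 1) ^ 3 * (w ^ p - 1))"
  proof -
    have "w \<noteq> 0" using w_pow by auto
    then have "w ^ (q - 1) = 1 / w" using w_pow by (simp add: eq_divide_eq mult.commute)
    then show ?thesis by (simp add: field_simps)
  qed
  finally show ?thesis .
qed

lemma fps_inverse_nth_4:
  fixes A :: "'a::field fps"
  defines "a \<equiv> fps_nth A"
  assumes "a 0 \<noteq> 0"
  shows "fps_nth (inverse A) 4 =
    (a 1 ^ 4 - 3 * a 0 * a 1 ^ 2 * a 2 + a 0 ^ 2 * a 2 ^ 2 + 2 * a 0 ^ 2 * a 1 * a 3 - a 0 ^ 3 * a 4)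
      / a 0 ^ 5"
  using assms by (simp add: fps_inverse_def numeral_eq_Suc field_simps)

definition binomial_quotient_poly :: "nat \<Rightarrow> 'a::comm_ring_1 poly" where
  "binomial_quotient_poly n = (\<Sum>k<n. monom (of_nat (n choose Suc k)) k)"

lemma coeff_binomial_quotient_poly:
  "coeff (binomial_quotient_poly n) k = of_nat (n choose Suc k)"
  unfolding binomial_quotient_poly_def by (simp add: coeff_sum binomial_eq_0)

lemma poly_binomial_quotient_poly: "u * poly (binomial_quotient_poly n) u = (1 + u) ^ n - 1"
proof (cases n)
  case 0
  then show ?thesis by (simp add: binomial_quotient_poly_def)
next
  case (Suc m)
  have "(1 + u) ^ n = (\<Sum>k\<le>n. of_nat (n choose k) * u ^ k)"
    using binomial_ring[of u 1 n] by (simp add: add.commute)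
  also have "\<dots> = 1 + (\<Sum>k\<le>m. of_nat (n choose Suc k) * u ^ Suc k)"
    unfolding Suc by (subst sum.atMost_Suc_shift) simp
  also have "(\<Sum>k\<le>m. of_nat (n choose Suc k) * u ^ Suc k) = u * poly (binomial_quotient_poly n) u"
    unfolding binomial_quotient_poly_def poly_sum poly_monom Suc lessThan_Suc_atMost[symmetric]
    by (simp add: sum_distrib_left mult_ac distrib_left del: binomial_Suc_Suc)
  finally show ?thesis by simp
qed

lemma binomial_convolution_inverse_coeff_4:
  fixes x y :: complex
  assumes "x \<noteq> 0" "y \<noteq> 0"
  defines "a \<equiv> \<lambda>k. \<Sum>i\<le>k. (x gchoose Suc i) * (y gchoose Suc (k - i))"
  shows "(a 1 ^ 4 - 3 * a 0 * a 1 ^ 2 * a 2 + a 0 ^ 2 * a 2 ^ 2 + 2 * a 0 ^ 2 * a 1 * a 3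
      - a 0 ^ 3 * a 4) / a 0 ^ 5
    = - (x^4 + y^4 - 5*x^2*y^2 - 15*x^2*y - 15*x*y^2 + 15*x + 15*y + 3) / (720*x*y)"
  using assms unfolding a_def by (simp add: atMost_Suc gbinomial_Suc numeral_eq_Suc field_simps)

lemma residue_rational_kernel_at_1:
  assumes "p \<ge> 1" "q \<ge> 1"
  defines "x \<equiv> of_nat p :: complex" and "y \<equiv> of_nat q :: complex"
  shows "residue (rational_kernel p q) 1 =
    - (x^4 + y^4 - 5*x^2*y^2 - 15*x^2*y - 15*x*y^2 + 15*x + 15*y + 3) / (720*x*y)"
proof -
  define B :: "complex poly" where "B = binomial_quotient_poly p * binomial_quotient_poly q"
  define a where "a = fps_nth (fps_of_poly B)"
  have a: "a k = (\<Sum>i\<le>k. (x gchoose Suc i) * (y gchoose Suc (k - i)))" for k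
    by (simp add: a_def B_def coeff_mult coeff_binomial_quotient_poly binomial_gbinomial x_def y_def)
  have xy: "x \<noteq> 0" "y \<noteq> 0" using assms by (auto simp: x_def y_def)
  then have a0: "a 0 \<noteq> 0" by (simp add: a)
  have "rational_kernel p q (1 + t) = inverse (poly B t) / t ^ Suc 4" for t
    using poly_binomial_quotient_poly[of t p, symmetric] poly_binomial_quotient_poly[of t q, symmetric]
    by (simp add: rational_kernel_def B_def divide_inverse numeral_eq_Suc mult_ac)
  then have "residue (rational_kernel p q) 1
      = residue (\<lambda>t. inverse (poly B t) / t ^ Suc 4) 0"
    by (subst residue_shift_0) simp
  also have "\<dots> = fps_nth (inverse (fps_of_poly B)) 4"
    using a0 by (intro residue_fps_expansion_over_power_at_0 has_fps_expansion_inverse)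
      (auto simp: a_def has_fps_expansion_def)
  also have "\<dots> = (a 1 ^ 4 - 3 * a 0 * a 1 ^ 2 * a 2 + a 0 ^ 2 * a 2 ^ 2 + 2 * a 0 ^ 2 * a 1 * a 3
      - a 0 ^ 3 * a 4) / a 0 ^ 5"
    using a0 unfolding a_def by (rule fps_inverse_nth_4)
  also have "\<dots> = - (x^4 + y^4 - 5*x^2*y^2 - 15*x^2*y - 15*x*y^2 + 15*x + 15*y + 3) / (720*x*y)"
    unfolding a by (rule binomial_convolution_inverse_coeff_4[OF xy])
  finally show ?thesis .
qed

lemma sum_residues_rational_kernel_at_unit_roots:
  assumes "coprime p q" and "q \<ge> 1"
  shows "(\<Sum>w\<in>unit_root q ` {1..q-1}. residue (rational_kernel p q) w) =
    (\<Sum>j=1..q-1. unit_root q j / ((unit_root q j - 1) ^ 3 * (unit_root q j ^ p - 1))) / of_nat q"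
proof -
  have "inj_on (unit_root q) {1..q-1}"
    using inj_on_unit_root[OF assms(2)] by (rule inj_on_subset) auto
  moreover have "residue (rational_kernel p q) (unit_root q j) =
      unit_root q j / ((unit_root q j - 1) ^ 3 * (unit_root q j ^ p - 1)) / of_nat q"
    if "j \<in> {1..q-1}" for j
    using assms that by (subst residue_rational_kernel_at_root)
      (auto simp: unit_root_pow_eq_1 unit_root_ne_1 unit_root_power_ne_1 mult_ac)
  ultimately show ?thesis by (simp add: sum.reindex sum_divide_distrib)
qed

lemma sum_residues_rational_kernel:
  assumes "p \<ge> 1" "q \<ge> 1" and "coprime p q"
  shows "residue (rational_kernel p q) 1
    + (\<Sum>w\<in>unit_root q ` {1..q-1}. residue (rational_kernel p q) w)
    + (\<Sum>w\<in>unit_root p ` {1..p-1}. residue (rational_kernel p q) w) = 0"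
proof -
  define X where "X = unit_root q ` {1..q-1}"
  define W where "W = unit_root p ` {1..p-1}"
  have poles: "{1} \<union> {z. z ^ p = 1} \<union> {z. z ^ q = 1} = insert 1 (X \<union> W)"
    unfolding roots_of_unity_eq[OF assms(1)] roots_of_unity_eq[OF assms(2)] X_def W_def by blast
  have "(\<Sum>s\<in>insert 1 (X \<union> W). residue (rational_kernel p q) s) = 0"
  proof (rule sum_residues_eq_0_if_decay)
    show "rational_kernel p q holomorphic_on - insert 1 (X \<union> W)"
      using holomorphic_rational_kernel[of p q] unfolding poles .
    show "norm (rational_kernel p q z) \<le> 4 / norm z ^ 2" if "norm z \<ge> 2" for z
      using norm_rational_kernel_le[OF assms(1,2) that] .
  qed (simp add: X_def W_def)
  moreover have "finite X" "finite W" by (simp_all add: X_def W_def)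
  moreover have "1 \<notin> X \<union> W"
    unfolding X_def W_def using unit_root_ne_1[of _ q] unit_root_ne_1[of _ p]
    by (fastforce simp: image_iff)
  moreover have "X \<inter> W = {}"
    unfolding X_def W_def by (rule nontrivial_unit_roots_disjoint[OF assms(3,1)])
  ultimately have "residue (rational_kernel p q) 1
      + ((\<Sum>w\<in>X. residue (rational_kernel p q) w) + (\<Sum>w\<in>W. residue (rational_kernel p q) w)) = 0"
    by (simp add: sum.union_disjoint)
  then show ?thesis by (simp add: X_def W_def add.assoc)
qed

theorem mainTheorem9:
  fixes p q :: nat
  assumes "p \<ge> 2" and "q \<ge> 2" and "coprime p q"
  defines "\<omega> \<equiv> (\<lambda>j::nat. exp (2 * of_real pi * \<i> * of_nat j / of_nat p) :: complex)"
      and "\<xi> \<equiv> (\<lambda>j::nat. exp (2 * of_real pi * \<i> * of_nat j / of_nat q) :: complex)"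
  shows "of_nat p * (\<Sum>j=1..q-1. \<xi> j / ((\<xi> j - 1)^3 * (\<xi> j ^ p - 1)))
       + of_nat q * (\<Sum>j=1..p-1. \<omega> j / ((\<omega> j - 1)^3 * (\<omega> j ^ q - 1)))
       = (of_nat p ^ 4 + of_nat q ^ 4 - 5 * of_nat p ^ 2 * of_nat q ^ 2
          - 15 * of_nat p ^ 2 * of_nat q - 15 * of_nat p * of_nat q ^ 2
          + 15 * of_nat p + 15 * of_nat q + 3) / 720"
proof -
  have pq: "p \<ge> 1" "q \<ge> 1" using assms(1,2) by auto
  define S\<^sub>\<xi> where "S\<^sub>\<xi> = (\<Sum>j=1..q-1. \<xi> j / ((\<xi> j - 1)^3 * (\<xi> j ^ p - 1)))"
  define S\<^sub>\<omega> where "S\<^sub>\<omega> = (\<Sum>j=1..p-1. \<omega> j / ((\<omega> j - 1)^3 * (\<omega> j ^ q - 1)))"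
  define E :: complex where "E = of_nat p ^ 4 + of_nat q ^ 4 - 5 * of_nat p ^ 2 * of_nat q ^ 2
    - 15 * of_nat p ^ 2 * of_nat q - 15 * of_nat p * of_nat q ^ 2 + 15 * of_nat p + 15 * of_nat q + 3"
  have roots: "\<omega> = unit_root p" "\<xi> = unit_root q"
    unfolding \<omega>_def \<xi>_def unit_root_def[abs_def] by (rule refl)+
  have "(\<Sum>w\<in>unit_root p ` {1..p-1}. residue (rational_kernel p q) w) = S\<^sub>\<omega> / of_nat p"
    using sum_residues_rational_kernel_at_unit_roots[of q p] assms(3) pq
    unfolding S\<^sub>\<omega>_def roots by (simp only: rational_kernel_commute[of q p] coprime_commute)
  moreover have "(\<Sum>w\<in>unit_root q ` {1..q-1}. residue (rational_kernel p q) w) = S\<^sub>\<xi> / of_nat q"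
    using sum_residues_rational_kernel_at_unit_roots[OF assms(3) pq(2)] unfolding S\<^sub>\<xi>_def roots .
  ultimately have "- E / (720 * of_nat p * of_nat q) + S\<^sub>\<xi> / of_nat q + S\<^sub>\<omega> / of_nat p = 0"
    using sum_residues_rational_kernel[OF pq assms(3)]
    unfolding residue_rational_kernel_at_1[OF pq] E_def by simp
  moreover have "x * a + y * b = E / 720"
    if "- E / (720 * x * y) + a / y + b / x = 0" "x \<noteq> 0" "y \<noteq> 0" for x y a b :: complex
    using that by (simp add: field_simps)
  ultimately show ?thesis
    using pq unfolding S\<^sub>\<xi>_def[symmetric] S\<^sub>\<omega>_def[symmetric] E_def[symmetric] by simp
qed

end
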